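(* There exist absolute constants $C_1,C_2>0$ such that the following holds. Let $P_*\in\mathcal N(n,K_*,L_* )$ be the true probability matrix, with parameters satisfying Assumptions A1 and A2, and let $A$ be generated from $P_*$ as in the network model. For $1\le L\le K\le n$ set $$\mathrm{Pen}(K,L)=C_1(nL+K^2)\ln n+C_2\, n\ln K .$$ Let $(\hat K,\hat L,\hat P)$ be a solution of $$(\hat K,\hat L,\hat P)\in\operatorname*{argmin}_{1\le L\le K\le n,\ P\in\mathcal N(n,K,L)}\Big\{\|A-P\|_F^2+\mathrm{Pen}(K,L)\Big\}.$$ Then for any $K,L$ with $1\le L\le K\le n$ and any $P\in\mathcal N(n,K,L)$, $$\mathbb P\Big\{\|\hat P-P_*\|_F^2\le 3\big[\|P-P_*\|_F^2+\mathrm{Pen}(K,L)\big]\Big\}\ge 1-(n^2\log_2 n+1)e^{-n/32},$$ and $$\mathbb E\|\hat P-P_*\|_F^2\le 3\big[\|P-P_*\|_F^2+\mathrm{Pen}(K,L)\big]+n^5e^{-n/32}.$$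
   Context: Network model: $n\ge 2$ nodes; $P_*\in[0,1]^{n\times n}$ is symmetric; $A\in\{0,1\}^{n\times n}$ is symmetric with entries $A_{ij}$, $1\le i\le j\le n$, independent, $A_{ij}\sim\mathrm{Bernoulli}((P_* )_{ij})$, and $A_{ji}=A_{ij}$. Nested Block Model class: for integers $1\le L\le K\le n$, $\mathcal N(n,K,L)$ is the set of matrices $P\in[0,1]^{n\times n}$ for which there exist a clustering function $z:\{1,\dots,n\}\to\{1,\dots,K\}$ (communities), a clustering function $c:\{1,\dots,K\}\to\{1,\dots,L\}$ (meta-communities), a matrix $B\in[0,1]^{K\times K}$ and a matrix $H\in\mathbb R_+^{n\times L}$ such that, with $n_k=\#\{i:z(i)=k\}$, $$\sum_{i:\,z(i)=k}H_{i,l}=n_k\quad\text{for all }k\le K,\ l\le L,$$ and $$P_{ij}=B_{z(i),z(j)}\,H_{i,c(z(j))}\,H_{j,c(z(i))}\quad\text{for all }i,j.$$ For such a representation, $h^{(k,l)}\in\mathbb R_+^{n_k}$ denotes the subvector $(H_{i,l})_{i:\,z(i)=k}$. Assumptions on the true matrix $P_*\in\mathcal N(n,K_*,L_* )$ with representation $(z_*,c_*,B,H)$: - A1: $B$ is nonsingular with smallest singular value at least $\lambda_0>0$. - A2: for each $k=1,\dots,K_*$, the vectors $h^{(k,l)}$, $l=1,\dots,L_*$, are linearly independent. *)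

theory Defs
  imports Complex_Main
begin

text \<open>Matrices are functions nat => nat => real; an n x n matrix uses the
indices 0..n-1 (node i of the paper is index i-1). Vectors are nat => real.
Clustering functions take values in 0..K-1 and 0..L-1.\<close>

definition frob2 :: "nat \<Rightarrow> (nat \<Rightarrow> nat \<Rightarrow> real) \<Rightarrow> (nat \<Rightarrow> nat \<Rightarrow> real) \<Rightarrow> real" where
  "frob2 n M N = (\<Sum>i<n. \<Sum>j<n. (M i j - N i j)^2)"

definition nbm_rep :: "nat \<Rightarrow> nat \<Rightarrow> nat \<Rightarrow> (nat \<Rightarrow> nat) \<Rightarrow> (nat \<Rightarrow> nat)
   \<Rightarrow> (nat \<Rightarrow> nat \<Rightarrow> real) \<Rightarrow> (nat \<Rightarrow> nat \<Rightarrow> real) \<Rightarrow> (nat \<Rightarrow> nat \<Rightarrow> real) \<Rightarrow> bool" where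
  "nbm_rep n K L z c B H P \<longleftrightarrow>
     (\<forall>i<n. \<forall>j<n. 0 \<le> P i j \<and> P i j \<le> 1) \<and>
     (\<forall>i<n. z i < K) \<and> (\<forall>k<K. c k < L) \<and>
     (\<forall>k<K. \<forall>k'<K. 0 \<le> B k k' \<and> B k k' \<le> 1) \<and>
     (\<forall>i<n. \<forall>l<L. 0 \<le> H i l) \<and>
     (\<forall>k<K. \<forall>l<L. (\<Sum>i\<in>{i. i < n \<and> z i = k}. H i l) = real (card {i. i < n \<and> z i = k})) \<and>
     (\<forall>i<n. \<forall>j<n. P i j = B (z i) (z j) * H i (c (z j)) * H j (c (z i)))"

definition NBM :: "nat \<Rightarrow> nat \<Rightarrow> nat \<Rightarrow> (nat \<Rightarrow> nat \<Rightarrow> real) set" where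
  "NBM n K L = {P. \<exists>z c B H. nbm_rep n K L z c B H P}"

definition smallest_singular_value :: "nat \<Rightarrow> (nat \<Rightarrow> nat \<Rightarrow> real) \<Rightarrow> real" where
  "smallest_singular_value K B =
     Inf {sqrt (\<Sum>k<K. (\<Sum>k'<K. B k k' * x k')^2) | x. (\<Sum>k<K. (x k)^2) = 1}"

definition nonsingular :: "nat \<Rightarrow> (nat \<Rightarrow> nat \<Rightarrow> real) \<Rightarrow> bool" where
  "nonsingular K B \<longleftrightarrow>
     (\<forall>x. (\<forall>k<K. (\<Sum>k'<K. B k k' * x k') = 0) \<longrightarrow> (\<forall>k<K. x k = 0))"

definition assumption_A1 :: "nat \<Rightarrow> (nat \<Rightarrow> nat \<Rightarrow> real) \<Rightarrow> real \<Rightarrow> bool" where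
  "assumption_A1 K B lambda0 \<longleftrightarrow>
     0 < lambda0 \<and> nonsingular K B \<and> smallest_singular_value K B \<ge> lambda0"

text \<open>Assumption A2: for each k, the vectors h^(k,l) = (H i l)_{z i = k}, l < L,
are linearly independent.\<close>
definition assumption_A2 :: "nat \<Rightarrow> nat \<Rightarrow> nat \<Rightarrow> (nat \<Rightarrow> nat) \<Rightarrow> (nat \<Rightarrow> nat \<Rightarrow> real) \<Rightarrow> bool" where
  "assumption_A2 n K L z H \<longleftrightarrow>
     (\<forall>k<K. \<forall>a :: nat \<Rightarrow> real.
        (\<forall>i<n. z i = k \<longrightarrow> (\<Sum>l<L. a l * H i l) = 0) \<longrightarrow> (\<forall>l<L. a l = 0))"

definition adj_set :: "nat \<Rightarrow> (nat \<Rightarrow> nat \<Rightarrow> real) set" where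
  "adj_set n = {A. (\<forall>i j. A i j = 0 \<or> A i j = 1) \<and> (\<forall>i j. A i j = A j i) \<and>
                   (\<forall>i j. n \<le> i \<or> n \<le> j \<longrightarrow> A i j = 0)}"

text \<open>Probability of adjacency matrix A: independent Bernoulli(P i j) entries, i <= j.\<close>
definition adj_weight :: "nat \<Rightarrow> (nat \<Rightarrow> nat \<Rightarrow> real) \<Rightarrow> (nat \<Rightarrow> nat \<Rightarrow> real) \<Rightarrow> real" where
  "adj_weight n P A = (\<Prod>i<n. \<Prod>j\<in>{i..<n}. if A i j = 1 then P i j else 1 - P i j)"

definition net_prob :: "nat \<Rightarrow> (nat \<Rightarrow> nat \<Rightarrow> real) \<Rightarrow> ((nat \<Rightarrow> nat \<Rightarrow> real) \<Rightarrow> bool) \<Rightarrow> real" where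
  "net_prob n P E = (\<Sum>A\<in>{A \<in> adj_set n. E A}. adj_weight n P A)"

definition net_expect :: "nat \<Rightarrow> (nat \<Rightarrow> nat \<Rightarrow> real) \<Rightarrow> ((nat \<Rightarrow> nat \<Rightarrow> real) \<Rightarrow> real) \<Rightarrow> real" where
  "net_expect n P f = (\<Sum>A\<in>adj_set n. adj_weight n P A * f A)"

definition Pen :: "real \<Rightarrow> real \<Rightarrow> nat \<Rightarrow> nat \<Rightarrow> nat \<Rightarrow> real" where
  "Pen C1 C2 n K L = C1 * (real n * real L + real K ^ 2) * ln (real n) + C2 * real n * ln (real K)"

definition is_pen_lse :: "real \<Rightarrow> real \<Rightarrow> nat \<Rightarrow>
    ((nat \<Rightarrow> nat \<Rightarrow> real) \<Rightarrow> nat \<times> nat \<times> (nat \<Rightarrow> nat \<Rightarrow> real)) \<Rightarrow> bool" where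
  "is_pen_lse C1 C2 n est \<longleftrightarrow>
     (\<forall>A\<in>adj_set n. case est A of (Kh, Lh, Ph) \<Rightarrow>
        1 \<le> Lh \<and> Lh \<le> Kh \<and> Kh \<le> n \<and> Ph \<in> NBM n Kh Lh \<and>
        (\<forall>K L P. 1 \<le> L \<and> L \<le> K \<and> K \<le> n \<and> P \<in> NBM n K L \<longrightarrow>
           frob2 n A Ph + Pen C1 C2 n Kh Lh \<le> frob2 n A P + Pen C1 C2 n K L))"

end

theory Submission
  imports Defs "HOL-Library.FuncSet"
begin

text \<open>The estimator \<open>P\<^sub>h\<close> satisfies the basic inequality
  \<open>\<parallel>A - P\<^sub>h\<parallel>\<^sup>2 + Pen(K\<^sub>h,L\<^sub>h) \<le> \<parallel>A - P\<parallel>\<^sup>2 + Pen(K,L)\<close>; expanding both sides around \<open>P\<^sub>*\<close>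
  bounds \<open>\<parallel>P\<^sub>h - P\<^sub>*\<parallel>\<^sup>2\<close> by \<open>\<parallel>P - P\<^sub>*\<parallel>\<^sup>2\<close>, the penalties and the noise terms
  \<open>\<langle>A - P\<^sub>*, P\<^sub>h - P\<^sub>*\<rangle>\<close> and \<open>\<langle>A - P\<^sub>*, P\<^sub>* - P\<rangle>\<close>. Such a noise term is a sum of independent,
  centred, bounded variables, so \<open>\<langle>A - P\<^sub>*, D\<rangle> \<ge> \<parallel>D\<parallel>\<^sup>2/16 + x\<close> has probability at most
  \<open>exp(-x/32)\<close>. Since \<open>P\<^sub>h\<close> is random, it is replaced by a point of a finite net of
  \<open>NBM n K\<^sub>h L\<^sub>h\<close> (parameters rounded down to the grid \<open>n\<^sup>-\<^sup>4\<close>) with at most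
  \<open>exp(8(nL+K\<^sup>2) ln n)\<close> points; the union bound over the net and over all \<open>(K,L)\<close> is then
  paid for by the penalty.\<close>

abbreviation unit_entries :: "nat \<Rightarrow> (nat \<Rightarrow> nat \<Rightarrow> real) \<Rightarrow> bool" where
  "unit_entries n P \<equiv> \<forall>i<n. \<forall>j<n. 0 \<le> P i j \<and> P i j \<le> 1"

definition upper_pairs :: "nat \<Rightarrow> (nat \<times> nat) set" where
  "upper_pairs n = (SIGMA i:{..<n}. {i..<n})"

definition of_upper_pairs :: "nat \<Rightarrow> (nat \<times> nat \<Rightarrow> real) \<Rightarrow> nat \<Rightarrow> nat \<Rightarrow> real" where
  "of_upper_pairs n g i j = (if i < n \<and> j < n then (if i \<le> j then g (i,j) else g (j,i)) else 0)"

lemma finite_upper_pairs [simp]: "finite (upper_pairs n)"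
  unfolding upper_pairs_def by auto

lemma bij_betw_adj_set_PiE:
  "bij_betw (\<lambda>A. restrict (\<lambda>(i,j). A i j) (upper_pairs n)) (adj_set n) (upper_pairs n \<rightarrow>\<^sub>E {0,1})"
proof (rule bij_betw_byWitness[where f' = "of_upper_pairs n"])
  show "\<forall>A\<in>adj_set n. of_upper_pairs n (restrict (\<lambda>(i,j). A i j) (upper_pairs n)) = A"
    by (auto simp: adj_set_def of_upper_pairs_def upper_pairs_def fun_eq_iff)
  show "\<forall>g\<in>upper_pairs n \<rightarrow>\<^sub>E {0,1}. restrict (\<lambda>(i,j). of_upper_pairs n g i j) (upper_pairs n) = g"
    by (auto simp: of_upper_pairs_def upper_pairs_def PiE_def extensional_def fun_eq_iff)
  show "(\<lambda>A. restrict (\<lambda>(i,j). A i j) (upper_pairs n)) ` adj_set n \<subseteq> upper_pairs n \<rightarrow>\<^sub>E {0,1}"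
    unfolding adj_set_def by (auto simp: PiE_def Pi_def; metis)
  show "of_upper_pairs n ` (upper_pairs n \<rightarrow>\<^sub>E {0,1}) \<subseteq> adj_set n"
  proof
    fix A assume "A \<in> of_upper_pairs n ` (upper_pairs n \<rightarrow>\<^sub>E {0::real,1})"
    then obtain g where g: "g \<in> upper_pairs n \<rightarrow>\<^sub>E {0,1}" and A: "A = of_upper_pairs n g" by auto
    have "g (i,j) = 0 \<or> g (i,j) = 1" if "i \<le> j" "j < n" for i j
      using g that unfolding upper_pairs_def by (auto simp: PiE_def Pi_def)
    then show "A \<in> adj_set n"
      unfolding A adj_set_def of_upper_pairs_def by (auto simp: not_le)
  qed
qed

lemma finite_adj_set [simp]: "finite (adj_set n)"
  using bij_betw_finite[OF bij_betw_adj_set_PiE[of n]] by (auto intro!: finite_PiE)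

lemma sum_adj_set_prod:
  fixes F :: "nat \<times> nat \<Rightarrow> real \<Rightarrow> real"
  shows "(\<Sum>A\<in>adj_set n. \<Prod>p\<in>upper_pairs n. F p (A (fst p) (snd p)))
       = (\<Prod>p\<in>upper_pairs n. F p 0 + F p 1)"
proof -
  have "(\<Sum>A\<in>adj_set n. \<Prod>p\<in>upper_pairs n. F p (A (fst p) (snd p)))
      = (\<Sum>A\<in>adj_set n. (\<lambda>g. \<Prod>p\<in>upper_pairs n. F p (g p)) (restrict (\<lambda>(i,j). A i j) (upper_pairs n)))"
    by (intro sum.cong refl prod.cong) auto
  also have "\<dots> = (\<Sum>g\<in>upper_pairs n \<rightarrow>\<^sub>E {0,1}. \<Prod>p\<in>upper_pairs n. F p (g p))"
    by (rule sum.reindex_bij_betw[OF bij_betw_adj_set_PiE])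
  also have "\<dots> = (\<Prod>p\<in>upper_pairs n. \<Sum>y\<in>{0,1}. F p y)"
    using prod_sum_PiE[of "upper_pairs n" "\<lambda>_. {0,1}" F] by simp
  finally show ?thesis by simp
qed

lemma adj_weight_upper_pairs:
  "adj_weight n P A = (\<Prod>p\<in>upper_pairs n. if A (fst p) (snd p) = 1 then P (fst p) (snd p) else 1 - P (fst p) (snd p))"
  unfolding adj_weight_def upper_pairs_def by (simp add: prod.Sigma split_def)

lemma sum_square_upper_pairs:
  fixes g :: "nat \<Rightarrow> nat \<Rightarrow> 'a::comm_monoid_add"
  shows "(\<Sum>i<n. \<Sum>j<n. g i j) = (\<Sum>p\<in>upper_pairs n.
           if fst p = snd p then g (fst p) (fst p) else g (fst p) (snd p) + g (snd p) (fst p))"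
proof -
  have "(\<Sum>i<n. \<Sum>j<n. g i j) = (\<Sum>i<n. \<Sum>j\<in>{i..<n}. if i = j then g i i else g i j + g j i)"
  proof (induction n)
    case (Suc n)
    have "(\<Sum>i<Suc n. \<Sum>j<Suc n. g i j) = (\<Sum>i<n. \<Sum>j<n. g i j) + ((\<Sum>i<n. g i n) + (\<Sum>j<n. g n j)) + g n n"
      by (simp add: sum.distrib ac_simps)
    also have "\<dots> = (\<Sum>i<n. \<Sum>j\<in>{i..<n}. if i = j then g i i else g i j + g j i) + (\<Sum>i<n. g i n + g n i) + g n n"
      using Suc by (simp add: sum.distrib)
    also have "\<dots> = (\<Sum>i<Suc n. \<Sum>j\<in>{i..<Suc n}. if i = j then g i i else g i j + g j i)"
      by (simp add: sum.distrib ac_simps)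
    finally show ?case .
  qed simp
  then show ?thesis
    unfolding upper_pairs_def by (simp add: sum.Sigma split_def)
qed

lemma adj_weight_nonneg: "unit_entries n P \<Longrightarrow> 0 \<le> adj_weight n P A"
  unfolding adj_weight_def by (intro prod_nonneg) auto

lemma sum_adj_weight:
  assumes "unit_entries n P"
  shows "(\<Sum>A\<in>adj_set n. adj_weight n P A) = 1"
proof -
  have "(\<Sum>A\<in>adj_set n. adj_weight n P A) = (\<Prod>p\<in>upper_pairs n. (1 - P (fst p) (snd p)) + P (fst p) (snd p))"
    unfolding adj_weight_upper_pairs
    using sum_adj_set_prod[of "\<lambda>p y. if y = 1 then P (fst p) (snd p) else 1 - P (fst p) (snd p)"]
    by simp
  then show ?thesis by simp
qed

lemma net_prob_nonneg: "unit_entries n P \<Longrightarrow> 0 \<le> net_prob n P E"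
  unfolding net_prob_def by (intro sum_nonneg adj_weight_nonneg)

lemma net_prob_mono:
  "unit_entries n P \<Longrightarrow> (\<And>A. A \<in> adj_set n \<Longrightarrow> E A \<Longrightarrow> F A) \<Longrightarrow> net_prob n P E \<le> net_prob n P F"
  unfolding net_prob_def by (intro sum_mono2) (auto intro: adj_weight_nonneg)

lemma net_prob_not:
  assumes "unit_entries n P"
  shows "net_prob n P (\<lambda>A. \<not> E A) = 1 - net_prob n P E"
proof -
  have "(\<Sum>A\<in>adj_set n. adj_weight n P A) = net_prob n P (\<lambda>A. \<not> E A) + net_prob n P E"
    unfolding net_prob_def by (subst sum.union_disjoint[symmetric]) (auto intro!: sum.cong)
  then show ?thesis using sum_adj_weight[OF assms] by simp
qed

lemma net_prob_disj_le:
  assumes "unit_entries n P"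
  shows "net_prob n P (\<lambda>A. E A \<or> F A) \<le> net_prob n P E + net_prob n P F"
proof -
  have eq: "{A \<in> adj_set n. E A \<or> F A} = {A \<in> adj_set n. E A} \<union> {A \<in> adj_set n. F A}" by auto
  have "net_prob n P (\<lambda>A. E A \<or> F A) + net_prob n P (\<lambda>A. E A \<and> F A) = net_prob n P E + net_prob n P F"
    unfolding net_prob_def eq by (subst sum.union_inter[symmetric]) (auto intro!: sum.cong)
  with net_prob_nonneg[OF assms, of "\<lambda>A. E A \<and> F A"] show ?thesis by linarith
qed

lemma net_prob_Bex_le:
  assumes "unit_entries n P" and "finite I"
  shows "net_prob n P (\<lambda>A. \<exists>k\<in>I. E k A) \<le> (\<Sum>k\<in>I. net_prob n P (E k))"
  using \<open>finite I\<close>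
proof (induction I rule: finite_induct)
  case empty
  then show ?case unfolding net_prob_def by simp
next
  case (insert a I)
  have "net_prob n P (\<lambda>A. \<exists>k\<in>insert a I. E k A) \<le> net_prob n P (E a) + net_prob n P (\<lambda>A. \<exists>k\<in>I. E k A)"
    using net_prob_disj_le[OF assms(1), of "E a" "\<lambda>A. \<exists>k\<in>I. E k A"] by simp
  with insert show ?case by simp
qed

lemma net_expect_le_indicator:
  assumes "unit_entries n P" and "\<And>A. A \<in> adj_set n \<Longrightarrow> f A \<le> R + c * of_bool (E A)"
  shows "net_expect n P f \<le> R + c * net_prob n P E"
proof -
  have "net_expect n P f \<le> (\<Sum>A\<in>adj_set n. R * adj_weight n P A + c * (if E A then adj_weight n P A else 0))"
    unfolding net_expect_def
    by (intro sum_mono order.trans[OF mult_left_mono[OF assms(2)]] adj_weight_nonneg[OF assms(1)])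
       (auto simp: algebra_simps)
  also have "\<dots> = R + c * net_prob n P E"
    unfolding sum.distrib sum_distrib_left[symmetric] sum_adj_weight[OF assms(1)] net_prob_def
    by (simp add: sum.inter_filter)
  finally show ?thesis .
qed

lemma net_prob_le_exp_moment:
  assumes "unit_entries n P" and "0 \<le> t"
  shows "net_prob n P (\<lambda>A. s \<le> f A) \<le> exp (- t * s) * net_expect n P (\<lambda>A. exp (t * f A))"
proof -
  have "net_prob n P (\<lambda>A. s \<le> f A) \<le> (\<Sum>A\<in>{A \<in> adj_set n. s \<le> f A}. adj_weight n P A * exp (t * (f A - s)))"
    unfolding net_prob_def
  proof (rule sum_mono)
    fix A assume "A \<in> {A \<in> adj_set n. s \<le> f A}"
    then have "adj_weight n P A * 1 \<le> adj_weight n P A * exp (t * (f A - s))"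
      using assms by (intro mult_left_mono adj_weight_nonneg) auto
    then show "adj_weight n P A \<le> adj_weight n P A * exp (t * (f A - s))" by simp
  qed
  also have "\<dots> \<le> (\<Sum>A\<in>adj_set n. adj_weight n P A * exp (t * (f A - s)))"
    using assms by (intro sum_mono2) (auto intro!: mult_nonneg_nonneg adj_weight_nonneg)
  also have "\<dots> = exp (- t * s) * net_expect n P (\<lambda>A. exp (t * f A))"
    unfolding net_expect_def sum_distrib_left
    by (intro sum.cong refl) (simp add: exp_diff exp_minus divide_inverse algebra_simps)
  finally show ?thesis .
qed

section \<open>Sub-Gaussian tail of the noise\<close>

lemma exp_le_quadratic:
  fixes y :: real
  assumes "\<bar>y\<bar> \<le> 1"
  shows "exp y \<le> 1 + y + y\<^sup>2"
proof (cases "y \<ge> 0")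
  case True
  then show ?thesis using exp_bound[of y] assms by simp
next
  case False
  have "exp y \<le> 1 / (1 - y)"
    using False exp_ge_add_one_self[of "- y"] by (simp add: exp_minus field_simps)
  also have "\<dots> \<le> 1 + y + y\<^sup>2"
  proof -
    have "(1 - y) * (1 + y + y\<^sup>2) = 1 - y * y\<^sup>2" by (simp add: algebra_simps power2_eq_square)
    moreover have "y * y\<^sup>2 \<le> 0" using False by (simp add: mult_nonpos_nonneg)
    ultimately have "1 \<le> (1 - y) * (1 + y + y\<^sup>2)" by simp
    then show ?thesis using False by (simp add: field_simps)
  qed
  finally show ?thesis .
qed

lemma bernoulli_mgf_le:
  fixes p u :: real
  assumes "0 \<le> p" "p \<le> 1" "\<bar>u\<bar> \<le> 1"
  shows "(1 - p) * exp (u * (0 - p)) + p * exp (u * (1 - p)) \<le> exp (u\<^sup>2)"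
proof -
  have "\<bar>u * (0 - p)\<bar> \<le> 1" "\<bar>u * (1 - p)\<bar> \<le> 1"
    using assms by (auto simp: abs_mult intro!: mult_le_one)
  then have "(1 - p) * exp (u * (0 - p)) + p * exp (u * (1 - p))
      \<le> (1 - p) * (1 + u * (0 - p) + (u * (0 - p))\<^sup>2) + p * (1 + u * (1 - p) + (u * (1 - p))\<^sup>2)"
    using assms by (intro add_mono mult_left_mono exp_le_quadratic) auto
  also have "\<dots> = 1 + u\<^sup>2 * (p * (1 - p))" by (simp add: algebra_simps power2_eq_square)
  also have "\<dots> \<le> 1 + u\<^sup>2" using assms by (auto intro!: mult_left_le mult_le_one)
  also have "\<dots> \<le> exp (u\<^sup>2)" by simp
  finally show ?thesis .
qed

definition noise :: "nat \<Rightarrow> (nat \<Rightarrow> nat \<Rightarrow> real) \<Rightarrow> (nat \<Rightarrow> nat \<Rightarrow> real) \<Rightarrow> (nat \<Rightarrow> nat \<Rightarrow> real) \<Rightarrow> real" where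
  "noise n P A D = (\<Sum>i<n. \<Sum>j<n. (A i j - P i j) * D i j)"

text \<open>The coefficient of the independent entry \<open>A i j\<close>, \<open>i \<le> j\<close>, in \<open>noise n P A D\<close>.\<close>

definition upper_pair_coeff :: "(nat \<Rightarrow> nat \<Rightarrow> real) \<Rightarrow> nat \<times> nat \<Rightarrow> real" where
  "upper_pair_coeff D p =
     (if fst p = snd p then D (fst p) (fst p) else D (fst p) (snd p) + D (snd p) (fst p))"

lemma noise_upper_pairs:
  assumes "A \<in> adj_set n" "\<forall>i j. P i j = P j i"
  shows "noise n P A D = (\<Sum>p\<in>upper_pairs n. (A (fst p) (snd p) - P (fst p) (snd p)) * upper_pair_coeff D p)"
proof -
  have "A i j = A j i" for i j using assms(1) unfolding adj_set_def by auto
  then show ?thesis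
    unfolding noise_def sum_square_upper_pairs upper_pair_coeff_def
    by (intro sum.cong refl) (auto simp: algebra_simps assms(2)[rule_format, of "snd _" "fst _"])
qed

lemma net_expect_exp_noise_le:
  assumes P: "unit_entries n P" "\<forall>i j. P i j = P j i"
    and small: "\<forall>p\<in>upper_pairs n. \<bar>t * upper_pair_coeff D p\<bar> \<le> 1"
  shows "net_expect n P (\<lambda>A. exp (t * noise n P A D))
       \<le> exp (t\<^sup>2 * (\<Sum>p\<in>upper_pairs n. (upper_pair_coeff D p)\<^sup>2))"
proof -
  define F where "F = (\<lambda>p y. (if y = 1 then P (fst p) (snd p) else 1 - P (fst p) (snd p))
                            * exp (t * ((y - P (fst p) (snd p)) * upper_pair_coeff D p)))"
  have "net_expect n P (\<lambda>A. exp (t * noise n P A D))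
      = (\<Sum>A\<in>adj_set n. \<Prod>p\<in>upper_pairs n. F p (A (fst p) (snd p)))"
    unfolding net_expect_def
  proof (intro sum.cong refl)
    fix A assume A: "A \<in> adj_set n"
    have "exp (t * noise n P A D)
        = (\<Prod>p\<in>upper_pairs n. exp (t * ((A (fst p) (snd p) - P (fst p) (snd p)) * upper_pair_coeff D p)))"
      unfolding noise_upper_pairs[OF A P(2)] sum_distrib_left exp_sum[OF finite_upper_pairs] ..
    then show "adj_weight n P A * exp (t * noise n P A D) = (\<Prod>p\<in>upper_pairs n. F p (A (fst p) (snd p)))"
      unfolding adj_weight_upper_pairs F_def prod.distrib by simp
  qed
  also have "\<dots> = (\<Prod>p\<in>upper_pairs n. F p 0 + F p 1)" by (rule sum_adj_set_prod)
  also have "\<dots> \<le> (\<Prod>p\<in>upper_pairs n. exp ((t * upper_pair_coeff D p)\<^sup>2))"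
  proof (rule prod_mono, rule conjI)
    fix p assume p: "p \<in> upper_pairs n"
    then have "0 \<le> P (fst p) (snd p)" "P (fst p) (snd p) \<le> 1"
      using P(1) unfolding upper_pairs_def by auto
    moreover have "F p 0 + F p 1 = (1 - P (fst p) (snd p)) * exp ((t * upper_pair_coeff D p) * (0 - P (fst p) (snd p)))
                               + P (fst p) (snd p) * exp ((t * upper_pair_coeff D p) * (1 - P (fst p) (snd p)))"
      unfolding F_def by (simp add: algebra_simps)
    ultimately show "0 \<le> F p 0 + F p 1" "F p 0 + F p 1 \<le> exp ((t * upper_pair_coeff D p)\<^sup>2)"
      using bernoulli_mgf_le[of "P (fst p) (snd p)" "t * upper_pair_coeff D p"] small p by auto
  qed
  also have "\<dots> = exp (t\<^sup>2 * (\<Sum>p\<in>upper_pairs n. (upper_pair_coeff D p)\<^sup>2))"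
    by (simp add: exp_sum[symmetric] sum_distrib_left power_mult_distrib)
  finally show ?thesis .
qed

lemma sum_upper_pair_coeff_sq_le:
  "(\<Sum>p\<in>upper_pairs n. (upper_pair_coeff D p)\<^sup>2) \<le> 2 * (\<Sum>i<n. \<Sum>j<n. (D i j)\<^sup>2)"
proof -
  have sq: "(a + b)\<^sup>2 \<le> 2 * (a\<^sup>2 + b\<^sup>2)" for a b :: real
    using sum_squares_ge_zero[of "a - b" 0] by (simp add: power2_eq_square algebra_simps)
  have "(\<Sum>p\<in>upper_pairs n. (upper_pair_coeff D p)\<^sup>2)
      \<le> (\<Sum>p\<in>upper_pairs n. 2 * (if fst p = snd p then (D (fst p) (fst p))\<^sup>2
                                  else (D (fst p) (snd p))\<^sup>2 + (D (snd p) (fst p))\<^sup>2))"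
    unfolding upper_pair_coeff_def using sq by (intro sum_mono) auto
  also have "\<dots> = 2 * (\<Sum>i<n. \<Sum>j<n. (D i j)\<^sup>2)"
    unfolding sum_square_upper_pairs[of "\<lambda>i j. (D i j)\<^sup>2"] sum_distrib_left split_def ..
  finally show ?thesis .
qed

lemma net_prob_noise_ge_le:
  assumes P: "unit_entries n P" "\<forall>i j. P i j = P j i"
    and D: "\<forall>i<n. \<forall>j<n. \<bar>D i j\<bar> \<le> 1"
  shows "net_prob n P (\<lambda>A. (\<Sum>i<n. \<Sum>j<n. (D i j)\<^sup>2) / 16 + x \<le> noise n P A D) \<le> exp (- x / 32)"
proof -
  define N where "N = (\<Sum>i<n. \<Sum>j<n. (D i j)\<^sup>2)"
  define t :: real where "t = 1 / 32"
  have small: "\<forall>p\<in>upper_pairs n. \<bar>t * upper_pair_coeff D p\<bar> \<le> 1"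
  proof
    fix p assume "p \<in> upper_pairs n"
    then have "\<bar>D (fst p) (snd p)\<bar> \<le> 1" "\<bar>D (snd p) (fst p)\<bar> \<le> 1" "\<bar>D (fst p) (fst p)\<bar> \<le> 1"
      using D unfolding upper_pairs_def by auto
    then have "\<bar>upper_pair_coeff D p\<bar> \<le> 2" unfolding upper_pair_coeff_def by auto
    then show "\<bar>t * upper_pair_coeff D p\<bar> \<le> 1" unfolding t_def by (simp add: abs_mult)
  qed
  have "net_prob n P (\<lambda>A. N / 16 + x \<le> noise n P A D)
      \<le> exp (- t * (N / 16 + x)) * net_expect n P (\<lambda>A. exp (t * noise n P A D))"
    by (rule net_prob_le_exp_moment[OF P(1)]) (simp add: t_def)
  also have "\<dots> \<le> exp (- t * (N / 16 + x)) * exp (t\<^sup>2 * (\<Sum>p\<in>upper_pairs n. (upper_pair_coeff D p)\<^sup>2))"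
    by (intro mult_left_mono net_expect_exp_noise_le[OF P small]) simp
  also have "\<dots> \<le> exp (- t * (N / 16 + x)) * exp (t\<^sup>2 * (2 * N))"
    unfolding N_def by (intro mult_left_mono) (auto intro: mult_left_mono sum_upper_pair_coeff_sq_le)
  also have "\<dots> = exp (- x / 32)"
    unfolding mult_exp_exp t_def by (simp add: algebra_simps power2_eq_square)
  finally show ?thesis unfolding N_def .
qed

section \<open>A finite net of the nested block model\<close>

definition grid_nbm :: "nat \<Rightarrow> nat \<Rightarrow> (nat \<Rightarrow> nat) \<Rightarrow> (nat \<Rightarrow> nat) \<Rightarrow> (nat \<times> nat \<Rightarrow> nat)
    \<Rightarrow> (nat \<times> nat \<Rightarrow> nat) \<Rightarrow> nat \<Rightarrow> nat \<Rightarrow> real" where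
  "grid_nbm n m z c b h i j =
     (if i < n \<and> j < n
      then (real (b (z i, z j)) / m) * (real (h (i, c (z j))) / m) * (real (h (j, c (z i))) / m)
      else 0)"

text \<open>Entries of \<open>B\<close> lie in \<open>[0,1]\<close> and entries of \<open>H\<close> in \<open>[0,n]\<close>, so on the grid \<open>n\<^sup>-\<^sup>4 \<nat>\<close>
  their numerators range over \<open>{..n\<^sup>4}\<close> and \<open>{..n\<^sup>5}\<close>.\<close>

definition grid_params :: "nat \<Rightarrow> nat \<Rightarrow> nat
    \<Rightarrow> ((nat \<Rightarrow> nat) \<times> (nat \<Rightarrow> nat) \<times> (nat \<times> nat \<Rightarrow> nat) \<times> (nat \<times> nat \<Rightarrow> nat)) set" where
  "grid_params n K L =
     ({..<n} \<rightarrow>\<^sub>E {..<K}) \<times> ({..<K} \<rightarrow>\<^sub>E {..<L}) \<times>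
     ({..<K} \<times> {..<K} \<rightarrow>\<^sub>E {..n ^ 4}) \<times> ({..<n} \<times> {..<L} \<rightarrow>\<^sub>E {..n ^ 5})"

definition nbm_net :: "nat \<Rightarrow> nat \<Rightarrow> nat \<Rightarrow> (nat \<Rightarrow> nat \<Rightarrow> real) set" where
  "nbm_net n K L =
     {M \<in> (\<lambda>(z,c,b,h). grid_nbm n (n ^ 4) z c b h) ` grid_params n K L. unit_entries n M}"

lemma finite_grid_params: "finite (grid_params n K L)"
  unfolding grid_params_def by (intro finite_cartesian_product finite_PiE) auto

lemma finite_nbm_net: "finite (nbm_net n K L)"
  unfolding nbm_net_def using finite_grid_params by auto

lemma card_nbm_net_le_power:
  assumes "2 \<le> n" "1 \<le> L" "L \<le> n" "K \<le> n"
  shows "card (nbm_net n K L) \<le> n ^ (8 * (n * L + K\<^sup>2))"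
proof -
  have "card (nbm_net n K L) \<le> card ((\<lambda>(z,c,b,h). grid_nbm n (n ^ 4) z c b h) ` grid_params n K L)"
    unfolding nbm_net_def by (intro card_mono finite_imageI finite_grid_params) auto
  also have "\<dots> \<le> card (grid_params n K L)" by (rule card_image_le[OF finite_grid_params])
  also have "\<dots> = K ^ n * L ^ K * (n ^ 4 + 1) ^ (K * K) * (n ^ 5 + 1) ^ (n * L)"
    unfolding grid_params_def by (simp add: card_cartesian_product card_PiE)
  also have "\<dots> \<le> n ^ n * n ^ n * (n ^ 5) ^ (K * K) * (n ^ 6) ^ (n * L)"
  proof (intro mult_mono power_mono)
    have "n ^ 4 < n ^ 5" "n ^ 5 < n ^ 6" using assms by (auto intro: power_strict_increasing)
    then show "n ^ 4 + 1 \<le> n ^ 5" "n ^ 5 + 1 \<le> n ^ 6" by simp_all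
    have "L ^ K \<le> n ^ K" using assms by (intro power_mono) auto
    also have "\<dots> \<le> n ^ n" using assms by (intro power_increasing) auto
    finally show "L ^ K \<le> n ^ n" .
  qed (use assms in auto)
  also have "\<dots> = n ^ (2 * n + 5 * K\<^sup>2 + 6 * (n * L))"
  proof -
    have "n ^ n * n ^ n = n ^ (n * 2)" by (simp only: power_add[symmetric] mult_2_right)
    then show ?thesis by (simp add: power_add power_mult[symmetric] power2_eq_square algebra_simps)
  qed
  also have "\<dots> \<le> n ^ (8 * (n * L + K\<^sup>2))"
  proof (intro power_increasing)
    have "n \<le> n * L" using assms by simp
    then show "2 * n + 5 * K\<^sup>2 + 6 * (n * L) \<le> 8 * (n * L + K\<^sup>2)"
      unfolding distrib_left by linarith
  qed (use assms in auto)
  finally show ?thesis .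
qed

lemma card_nbm_net_le_exp:
  assumes "2 \<le> n" "1 \<le> L" "L \<le> n" "K \<le> n"
  shows "real (card (nbm_net n K L)) \<le> exp (8 * ((real n * real L + real K ^ 2) * ln (real n)))"
proof -
  have "real (card (nbm_net n K L)) \<le> real (n ^ (8 * (n * L + K\<^sup>2)))"
    using card_nbm_net_le_power[OF assms] by linarith
  also have "\<dots> = real n powr real (8 * (n * L + K\<^sup>2))"
    using assms by (subst powr_realpow) auto
  also have "\<dots> = exp (8 * ((real n * real L + real K ^ 2) * ln (real n)))"
    using assms unfolding powr_def by (simp add: algebra_simps)
  finally show ?thesis .
qed

definition round_down :: "nat \<Rightarrow> real \<Rightarrow> real" where
  "round_down m x = real (nat \<lfloor>x * real m\<rfloor>) / real m"

lemma round_down_bounds: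
  assumes "0 \<le> x" "0 < m"
  shows "0 \<le> round_down m x" "round_down m x \<le> x" "x - round_down m x \<le> 1 / real m"
proof -
  have f: "real (nat \<lfloor>x * real m\<rfloor>) = of_int \<lfloor>x * real m\<rfloor>" using assms by simp
  have a: "of_int \<lfloor>x * real m\<rfloor> \<le> x * real m" by (rule of_int_floor_le)
  have b: "x * real m < of_int \<lfloor>x * real m\<rfloor> + 1" by (rule real_of_int_floor_add_one_gt)
  show "0 \<le> round_down m x" unfolding round_down_def by simp
  show "round_down m x \<le> x" unfolding round_down_def f using a assms by (simp add: field_simps)
  have "x - 1 / real m = (x * real m - 1) / real m" using assms by (simp add: field_simps)
  also have "\<dots> \<le> of_int \<lfloor>x * real m\<rfloor> / real m" using b by (intro divide_right_mono) auto
  finally show "x - round_down m x \<le> 1 / real m" unfolding round_down_def f by linarith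
qed

lemma nat_floor_mult_le:
  assumes "0 \<le> x" "x \<le> real U"
  shows "nat \<lfloor>x * real m\<rfloor> \<le> U * m"
proof -
  have "x * real m \<le> real U * real m" using assms by (intro mult_right_mono) auto
  then have "\<lfloor>x * real m\<rfloor> \<le> int (U * m)" by (simp add: floor_le_iff)
  then show ?thesis by (metis nat_le_iff of_nat_mult)
qed

lemma prod3_approx:
  fixes a a' b b' c c' e N :: real
  assumes "0 \<le> a'" "a' \<le> a" "a \<le> 1" "0 \<le> b'" "b' \<le> b" "b \<le> N" "0 \<le> c'" "c' \<le> c" "c \<le> N"
    "a - a' \<le> e" "b - b' \<le> e" "c - c' \<le> e" "1 \<le> N"
  shows "a' * b' * c' \<le> a * b * c" "a * b * c - a' * b' * c' \<le> 3 * N\<^sup>2 * e"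
proof -
  have split: "a * b * c - a' * b' * c' = (a - a') * b * c + a' * (b - b') * c + a' * b' * (c - c')"
    by (simp add: algebra_simps)
  have e: "0 \<le> e" using assms by linarith
  have t1: "0 \<le> (a - a') * b * c" "(a - a') * b * c \<le> e * N * N"
    using assms by (auto intro!: mult_mono mult_nonneg_nonneg)
  have "a' * (b - b') \<le> 1 * e" by (rule mult_mono) (use assms in auto)
  then have t2: "0 \<le> a' * (b - b') * c" "a' * (b - b') * c \<le> 1 * e * N"
    using assms e by (auto intro!: mult_nonneg_nonneg mult_mono)
  have "a' * b' \<le> 1 * N" by (rule mult_mono) (use assms in auto)
  then have t3: "0 \<le> a' * b' * (c - c')" "a' * b' * (c - c') \<le> 1 * N * e"
    using assms e by (auto intro!: mult_nonneg_nonneg mult_mono)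
  have "e * N * 1 \<le> e * N * N" using assms e by (intro mult_left_mono) auto
  then show "a * b * c - a' * b' * c' \<le> 3 * N\<^sup>2 * e"
    unfolding split using t1 t2 t3 by (simp add: power2_eq_square algebra_simps)
  show "a' * b' * c' \<le> a * b * c" using split t1 t2 t3 by linarith
qed

lemma round_down_prod3_approx:
  assumes "0 \<le> b" "b \<le> 1" "0 \<le> h" "h \<le> N" "0 \<le> h'" "h' \<le> N" "1 \<le> N" "0 < m"
  defines "r \<equiv> round_down m b * round_down m h * round_down m h'"
  shows "0 \<le> r" "r \<le> b * h * h'" "b * h * h' - r \<le> 3 * N\<^sup>2 * (1 / real m)"
proof -
  note r1 = round_down_bounds[OF assms(1,8)]
    and r2 = round_down_bounds[OF assms(3,8)] and r3 = round_down_bounds[OF assms(5,8)]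
  show "0 \<le> r" unfolding r_def using r1(1) r2(1) r3(1) by simp
  show "r \<le> b * h * h'" "b * h * h' - r \<le> 3 * N\<^sup>2 * (1 / real m)"
    unfolding r_def using prod3_approx[OF r1(1,2) assms(2) r2(1,2) assms(4) r3(1,2) assms(6)
        r1(3) r2(3) r3(3) assms(7)]
    by simp_all
qed

lemma nbm_rep_H_le:
  assumes "nbm_rep n K L z c B H P" "i < n" "l < L"
  shows "H i l \<le> real n"
proof -
  let ?S = "{i'. i' < n \<and> z i' = z i}"
  have "H i l \<le> (\<Sum>i'\<in>?S. H i' l)"
    by (rule member_le_sum) (use assms in \<open>auto simp: nbm_rep_def\<close>)
  also have "\<dots> = real (card ?S)" using assms unfolding nbm_rep_def by auto
  also have "\<dots> \<le> real n"
    using card_mono[of "{..<n}" ?S] by auto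
  finally show ?thesis .
qed

lemma nbm_net_approx:
  assumes n: "2 \<le> n" and Q: "Q \<in> NBM n K L"
  shows "\<exists>M\<in>nbm_net n K L. \<forall>i<n. \<forall>j<n. \<bar>M i j - Q i j\<bar> \<le> 3 / real n ^ 2"
proof -
  obtain z c B H where rep: "nbm_rep n K L z c B H Q" using Q unfolding NBM_def by auto
  have zK: "\<And>i. i < n \<Longrightarrow> z i < K" and cL: "\<And>k. k < K \<Longrightarrow> c k < L"
    and B01: "\<And>k k'. k < K \<Longrightarrow> k' < K \<Longrightarrow> 0 \<le> B k k' \<and> B k k' \<le> 1"
    and H0: "\<And>i l. i < n \<Longrightarrow> l < L \<Longrightarrow> 0 \<le> H i l"
    and Qeq: "\<And>i j. i < n \<Longrightarrow> j < n \<Longrightarrow> Q i j = B (z i) (z j) * H i (c (z j)) * H j (c (z i))"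
    and Q01: "unit_entries n Q"
    using rep unfolding nbm_rep_def by auto
  have Hn: "\<And>i l. i < n \<Longrightarrow> l < L \<Longrightarrow> H i l \<le> real n" using nbm_rep_H_le[OF rep] by auto
  define m where "m = n ^ 4"
  have m0: "0 < m" using n unfolding m_def by simp
  define b where "b = restrict (\<lambda>(k,k'). nat \<lfloor>B k k' * real m\<rfloor>) ({..<K} \<times> {..<K})"
  define h where "h = restrict (\<lambda>(i,l). nat \<lfloor>H i l * real m\<rfloor>) ({..<n} \<times> {..<L})"
  define M where "M = grid_nbm n m (restrict z {..<n}) (restrict c {..<K}) b h"
  have "n * n ^ 4 = n ^ 5" by (simp add: power_Suc[symmetric] del: power_Suc)
  then have par: "(restrict z {..<n}, restrict c {..<K}, b, h) \<in> grid_params n K L"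
    unfolding grid_params_def b_def h_def
    using zK cL nat_floor_mult_le[of "B _ _" 1 m] nat_floor_mult_le[of "H _ _" n m] B01 H0 Hn
    by (auto simp: m_def)
  have Mij: "M i j = round_down m (B (z i) (z j)) * round_down m (H i (c (z j))) * round_down m (H j (c (z i)))"
    if "i < n" "j < n" for i j
    using that zK cL unfolding M_def grid_nbm_def b_def h_def round_down_def by auto
  have err: "0 \<le> M i j \<and> M i j \<le> Q i j \<and> Q i j - M i j \<le> 3 * real n ^ 2 * (1 / real m)"
    if "i < n" "j < n" for i j
    using round_down_prod3_approx[of "B (z i) (z j)" "H i (c (z j))" "real n" "H j (c (z i))" m]
      Mij[OF that] Qeq[OF that] B01 H0 Hn zK cL that n m0
    by simp
  have "M \<in> nbm_net n K L"
    unfolding nbm_net_def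
  proof (intro CollectI conjI allI impI)
    show "M \<in> (\<lambda>(z,c,b,h). grid_nbm n (n ^ 4) z c b h) ` grid_params n K L"
      using par unfolding M_def m_def by force
    fix i j assume "i < n" "j < n"
    then show "0 \<le> M i j" "M i j \<le> 1" using err[of i j] Q01 by force+
  qed
  moreover have "\<bar>M i j - Q i j\<bar> \<le> 3 / real n ^ 2" if "i < n" "j < n" for i j
  proof -
    have "3 * real n ^ 2 * (1 / real m) = 3 / real n ^ 2"
      using n unfolding m_def by (simp add: field_simps power2_eq_square eval_nat_numeral)
    then show ?thesis using err[OF that] by auto
  qed
  ultimately show ?thesis by blast
qed

section \<open>The basic inequality\<close>

lemma NBM_unit_entries: "Q \<in> NBM n K L \<Longrightarrow> unit_entries n Q"
  unfolding NBM_def nbm_rep_def by auto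

lemma frob2_nonneg: "0 \<le> frob2 n X Y"
  unfolding frob2_def by (intro sum_nonneg) auto

lemma frob2_commute: "frob2 n X Y = frob2 n Y X"
  unfolding frob2_def by (simp add: power2_commute)

lemma frob2_le_of_entrywise:
  assumes "\<forall>i<n. \<forall>j<n. \<bar>X i j - Y i j\<bar> \<le> d"
  shows "frob2 n X Y \<le> real n ^ 2 * d\<^sup>2"
proof -
  have "frob2 n X Y \<le> (\<Sum>i<n. \<Sum>j<n. d\<^sup>2)"
    unfolding frob2_def using assms
    by (intro sum_mono) (auto simp flip: abs_le_square_iff intro: order.trans[OF _ abs_ge_self])
  then show ?thesis by (simp add: power2_eq_square)
qed

lemma unit_entries_abs_diff_le:
  assumes "unit_entries n X" "unit_entries n Y"
  shows "\<forall>i<n. \<forall>j<n. \<bar>X i j - Y i j\<bar> \<le> 1"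
proof (intro allI impI)
  fix i j assume "i < n" "j < n"
  then have "0 \<le> X i j" "X i j \<le> 1" "0 \<le> Y i j" "Y i j \<le> 1" using assms by auto
  then show "\<bar>X i j - Y i j\<bar> \<le> 1" by (simp add: abs_le_iff)
qed

lemma frob2_le_square:
  assumes "unit_entries n X" "unit_entries n Y"
  shows "frob2 n X Y \<le> real n ^ 2"
  using frob2_le_of_entrywise[OF unit_entries_abs_diff_le[OF assms]] by simp

lemma frob2_triangle: "frob2 n M P \<le> 2 * frob2 n X P + 2 * frob2 n M X"
proof -
  have "(M i j - P i j)\<^sup>2 \<le> 2 * (X i j - P i j)\<^sup>2 + 2 * (M i j - X i j)\<^sup>2" for i j
    using sum_squares_ge_zero[of "(X i j - P i j) - (M i j - X i j)" 0]
    by (simp add: power2_eq_square algebra_simps)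
  then have "frob2 n M P \<le> (\<Sum>i<n. \<Sum>j<n. 2 * (X i j - P i j)\<^sup>2 + 2 * (M i j - X i j)\<^sup>2)"
    unfolding frob2_def by (intro sum_mono)
  then show ?thesis by (simp add: frob2_def sum.distrib sum_distrib_left)
qed

lemma frob2_expand:
  "frob2 n A X = frob2 n A P + frob2 n X P - 2 * noise n P A (\<lambda>i j. X i j - P i j)"
  unfolding frob2_def noise_def
  by (simp add: sum_subtractf[symmetric] sum.distrib[symmetric] sum_distrib_left power2_eq_square algebra_simps)

lemma noise_uminus: "noise n P A (\<lambda>i j. - D i j) = - noise n P A D"
  unfolding noise_def by (simp add: sum_negf[symmetric])

lemma noise_add: "noise n P A (\<lambda>i j. D i j + E i j) = noise n P A D + noise n P A E"
  unfolding noise_def by (simp add: sum.distrib[symmetric] algebra_simps)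

lemma abs_noise_le:
  assumes A: "A \<in> adj_set n" and P: "unit_entries n P" and D: "\<forall>i<n. \<forall>j<n. \<bar>D i j\<bar> \<le> d"
  shows "\<bar>noise n P A D\<bar> \<le> real n ^ 2 * d"
proof -
  have "\<bar>noise n P A D\<bar> \<le> (\<Sum>i<n. \<Sum>j<n. \<bar>(A i j - P i j) * D i j\<bar>)"
    unfolding noise_def by (rule order.trans[OF sum_abs]) (intro sum_mono sum_abs)
  also have "\<dots> \<le> (\<Sum>i<n. \<Sum>j<n. d)"
  proof (intro sum_mono)
    fix i j assume "i \<in> {..<n}" "j \<in> {..<n}"
    then have "A i j = 0 \<or> A i j = 1" "0 \<le> P i j" "P i j \<le> 1" "\<bar>D i j\<bar> \<le> d"
      using A P D unfolding adj_set_def by auto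
    then have "\<bar>A i j - P i j\<bar> \<le> 1" "\<bar>D i j\<bar> \<le> d" by auto
    then show "\<bar>(A i j - P i j) * D i j\<bar> \<le> d"
      unfolding abs_mult using mult_mono[of "\<bar>A i j - P i j\<bar>" 1 "\<bar>D i j\<bar>" d] by simp
  qed
  also have "\<dots> = real n ^ 2 * d" by (simp add: power2_eq_square)
  finally show ?thesis .
qed

lemma oracle_inequality_of_small_noise:
  fixes A P Pstar Ph M :: "nat \<Rightarrow> nat \<Rightarrow> real"
  assumes n: "2 \<le> n" and A: "A \<in> adj_set n" and Pstar: "unit_entries n Pstar"
    and basic: "frob2 n A Ph + pen_h \<le> frob2 n A P + pen"
    and close: "\<forall>i<n. \<forall>j<n. \<bar>M i j - Ph i j\<bar> \<le> 3 / real n ^ 2"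
    and small_net: "noise n Pstar A (\<lambda>i j. M i j - Pstar i j) < frob2 n M Pstar / 16 + x"
    and small_P: "noise n Pstar A (\<lambda>i j. Pstar i j - P i j) < frob2 n P Pstar / 16 + real n"
    and pen_h: "2 * x + 7 \<le> pen_h" and pen: "2 * real n \<le> pen"
  shows "frob2 n Ph Pstar \<le> 3 * (frob2 n P Pstar + pen)"
proof -
  define w_net where "w_net = noise n Pstar A (\<lambda>i j. M i j - Pstar i j)"
  define w_round where "w_round = noise n Pstar A (\<lambda>i j. Ph i j - M i j)"
  define w_P where "w_P = noise n Pstar A (\<lambda>i j. Pstar i j - P i j)"
  have "noise n Pstar A (\<lambda>i j. Ph i j - Pstar i j) = w_net + w_round"
    using noise_add[of n Pstar A "\<lambda>i j. M i j - Pstar i j" "\<lambda>i j. Ph i j - M i j"]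
    unfolding w_net_def w_round_def by simp
  moreover have "noise n Pstar A (\<lambda>i j. P i j - Pstar i j) = - w_P"
    using noise_uminus[of n Pstar A "\<lambda>i j. Pstar i j - P i j"] unfolding w_P_def by simp
  ultimately have expanded: "frob2 n Ph Pstar + pen_h \<le> frob2 n P Pstar + pen + 2 * w_net + 2 * w_round + 2 * w_P"
    using basic frob2_expand[of n A Ph Pstar] frob2_expand[of n A P Pstar] by linarith
  have n2: "4 \<le> real n ^ 2"
    using n power_mono[of 2 "real n" 2] by simp
  have "\<bar>w_round\<bar> \<le> real n ^ 2 * (3 / real n ^ 2)"
    unfolding w_round_def using close by (intro abs_noise_le[OF A Pstar]) (simp add: abs_minus_commute)
  then have rounding: "w_round \<le> 3"
    using n by (simp add: abs_le_iff)
  have "frob2 n M Ph \<le> real n ^ 2 * (3 / real n ^ 2)\<^sup>2"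
    by (rule frob2_le_of_entrywise[OF close])
  also have "\<dots> = 9 / real n ^ 2"
    using n by (simp add: power2_eq_square)
  also have "\<dots> \<le> 9 / 4"
    using n n2 by (intro divide_left_mono) auto
  finally have "frob2 n M Pstar \<le> 2 * frob2 n Ph Pstar + 9 / 2"
    using frob2_triangle[of n M Pstar Ph] by linarith
  moreover have "0 \<le> frob2 n P Pstar" "0 \<le> real n" by (simp_all add: frob2_nonneg)
  ultimately show ?thesis
    using expanded rounding small_net small_P pen_h pen unfolding w_net_def[symmetric] w_P_def[symmetric]
    by argo
qed

section \<open>The penalty pays for the union bound\<close>

text \<open>The deviation level allowed on the net of \<open>NBM n K L\<close>: with at most
  \<open>exp(8(nL+K\<^sup>2) ln n)\<close> net points, the union bound gives probability \<open>exp(-n/32) / n\<^sup>2\<close>,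
  which sums to \<open>exp(-n/32)\<close> over the \<open>n\<^sup>2\<close> choices of \<open>(K,L)\<close>.\<close>

definition deviation :: "nat \<Rightarrow> nat \<Rightarrow> nat \<Rightarrow> real" where
  "deviation n K L = 256 * ((real n * real L + real K ^ 2) * ln (real n)) + 64 * ln (real n) + real n"

lemma ln_ge_half:
  assumes "2 \<le> n"
  shows "1 / 2 \<le> ln (real n)"
proof -
  have "exp (1 / 2 :: real) \<le> 1 + 1 / 2 + (1 / 2)\<^sup>2" by (rule exp_bound) auto
  also have "\<dots> \<le> real n" using assms by (simp add: power2_eq_square)
  finally show ?thesis using assms by (subst ln_ge_iff) auto
qed

lemma deviation_le_Pen:
  assumes "2 \<le> n" "1 \<le> L" "L \<le> K"
  shows "2 * deviation n K L + 7 \<le> Pen 1000 1 n K L"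
proof -
  define S where "S = real n * real L + real K ^ 2"
  define T where "T = S * ln (real n)"
  have "real n \<le> real n * real L" "1 \<le> real K ^ 2"
    using assms mult_left_mono[of 1 "real L" "real n"] by simp_all
  then have S: "real n + 1 \<le> S" unfolding S_def by linarith
  have ln: "1 / 2 \<le> ln (real n)" by (rule ln_ge_half[OF assms(1)])
  have "(real n + 1) * (1 / 2) \<le> T" unfolding T_def using S ln by (intro mult_mono) auto
  moreover have "1 * ln (real n) \<le> T" unfolding T_def using S ln by (intro mult_right_mono) auto
  moreover have "1000 * T \<le> Pen 1000 1 n K L"
    using assms unfolding Pen_def T_def S_def by (simp add: algebra_simps)
  moreover have "deviation n K L = 256 * T + 64 * ln (real n) + real n"
    unfolding deviation_def T_def S_def ..
  moreover have "2 \<le> real n" using assms by simp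
  ultimately show ?thesis by argo
qed

lemma real_le_deviation:
  assumes "2 \<le> n"
  shows "real n \<le> deviation n K L"
proof -
  have "0 \<le> ln (real n)" using assms by simp
  then show ?thesis unfolding deviation_def by simp
qed

definition net_deviates_at :: "nat \<Rightarrow> (nat \<Rightarrow> nat \<Rightarrow> real) \<Rightarrow> nat \<Rightarrow> nat \<Rightarrow> (nat \<Rightarrow> nat \<Rightarrow> real) \<Rightarrow> bool" where
  "net_deviates_at n Pstar K L A \<longleftrightarrow>
     (\<exists>M\<in>nbm_net n K L.
        frob2 n M Pstar / 16 + deviation n K L \<le> noise n Pstar A (\<lambda>i j. M i j - Pstar i j))"

definition net_deviates :: "nat \<Rightarrow> (nat \<Rightarrow> nat \<Rightarrow> real) \<Rightarrow> (nat \<Rightarrow> nat \<Rightarrow> real) \<Rightarrow> bool" where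
  "net_deviates n Pstar A \<longleftrightarrow> (\<exists>K\<in>{1..n}. \<exists>L\<in>{1..n}. net_deviates_at n Pstar K L A)"

lemma net_prob_net_deviates_at_le:
  assumes n: "2 \<le> n" and P: "unit_entries n Pstar" "\<forall>i j. Pstar i j = Pstar j i"
    and KL: "K \<in> {1..n}" "L \<in> {1..n}"
  shows "net_prob n Pstar (net_deviates_at n Pstar K L) \<le> exp (- real n / 32) / real n ^ 2"
proof -
  define T where "T = (real n * real L + real K ^ 2) * ln (real n)"
  have "net_prob n Pstar (net_deviates_at n Pstar K L)
      \<le> (\<Sum>M\<in>nbm_net n K L. net_prob n Pstar (\<lambda>A.
           frob2 n M Pstar / 16 + deviation n K L \<le> noise n Pstar A (\<lambda>i j. M i j - Pstar i j)))"
    unfolding net_deviates_at_def[abs_def] by (rule net_prob_Bex_le[OF P(1) finite_nbm_net])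
  also have "\<dots> \<le> (\<Sum>M\<in>nbm_net n K L. exp (- deviation n K L / 32))"
  proof (rule sum_mono)
    fix M assume "M \<in> nbm_net n K L"
    then have "unit_entries n M" unfolding nbm_net_def by blast
    from net_prob_noise_ge_le[OF P unit_entries_abs_diff_le[OF this P(1)]]
    show "net_prob n Pstar (\<lambda>A. frob2 n M Pstar / 16 + deviation n K L
            \<le> noise n Pstar A (\<lambda>i j. M i j - Pstar i j)) \<le> exp (- deviation n K L / 32)"
      unfolding frob2_def .
  qed
  also have "\<dots> \<le> exp (8 * T) * exp (- deviation n K L / 32)"
    using card_nbm_net_le_exp[of n L K] n KL unfolding T_def by (simp add: mult_right_mono)
  also have "\<dots> = exp (- real n / 32) * exp (- (2 * ln (real n)))"
    unfolding mult_exp_exp deviation_def T_def by (simp add: field_simps)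
  also have "exp (- (2 * ln (real n))) = 1 / real n ^ 2"
    using n exp_of_nat_mult[of 2 "ln (real n)"] by (simp add: exp_minus field_simps)
  finally show ?thesis by simp
qed

lemma net_prob_net_deviates_le:
  assumes "2 \<le> n" "unit_entries n Pstar" "\<forall>i j. Pstar i j = Pstar j i"
  shows "net_prob n Pstar (net_deviates n Pstar) \<le> exp (- real n / 32)"
proof -
  have "net_prob n Pstar (net_deviates n Pstar)
      \<le> (\<Sum>K\<in>{1..n}. net_prob n Pstar (\<lambda>A. \<exists>L\<in>{1..n}. net_deviates_at n Pstar K L A))"
    unfolding net_deviates_def[abs_def] by (rule net_prob_Bex_le[OF assms(2)]) simp
  also have "\<dots> \<le> (\<Sum>K\<in>{1..n}. \<Sum>L\<in>{1..n}. net_prob n Pstar (net_deviates_at n Pstar K L))"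
    by (intro sum_mono net_prob_Bex_le[OF assms(2)]) simp
  also have "\<dots> \<le> (\<Sum>K\<in>{1..n}. \<Sum>L\<in>{1..n}. exp (- real n / 32) / real n ^ 2)"
    by (intro sum_mono net_prob_net_deviates_at_le[OF assms])
  also have "\<dots> = exp (- real n / 32)"
    using assms(1) by (simp add: power2_eq_square)
  finally show ?thesis .
qed

lemma net_prob_net_expect_of_good_event:
  fixes f :: "(nat \<Rightarrow> nat \<Rightarrow> real) \<Rightarrow> real"
  assumes n: "2 \<le> n" and P: "unit_entries n P"
    and good: "\<And>A. A \<in> adj_set n \<Longrightarrow> \<not> bad A \<Longrightarrow> f A \<le> R"
    and bounded: "\<And>A. A \<in> adj_set n \<Longrightarrow> f A \<le> real n ^ 2"
    and R: "0 \<le> R" and e: "0 \<le> e" and bad: "net_prob n P bad \<le> 2 * e"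
  shows "net_prob n P (\<lambda>A. f A \<le> R) \<ge> 1 - (real n ^ 2 * log 2 (real n) + 1) * e"
    and "net_expect n P f \<le> R + real n ^ 5 * e"
proof -
  have n2: "4 \<le> real n ^ 2" using n power_mono[of 2 "real n" 2] by simp
  have "1 - 2 * e \<le> net_prob n P (\<lambda>A. \<not> bad A)"
    using net_prob_not[OF P] bad by simp
  also have "\<dots> \<le> net_prob n P (\<lambda>A. f A \<le> R)"
    by (rule net_prob_mono[OF P]) (rule good)
  finally have "1 - 2 * e \<le> net_prob n P (\<lambda>A. f A \<le> R)" .
  moreover have "4 * 1 \<le> real n ^ 2 * log 2 (real n)"
    using n n2 by (intro mult_mono) auto
  then have "2 * e \<le> (real n ^ 2 * log 2 (real n) + 1) * e"
    using e by (intro mult_right_mono) auto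
  ultimately show "net_prob n P (\<lambda>A. f A \<le> R) \<ge> 1 - (real n ^ 2 * log 2 (real n) + 1) * e"
    by linarith
  have "net_expect n P f \<le> R + real n ^ 2 * net_prob n P bad"
  proof (rule net_expect_le_indicator[OF P])
    fix A assume "A \<in> adj_set n"
    then show "f A \<le> R + real n ^ 2 * of_bool (bad A)"
      using good[of A] bounded[of A] R by (cases "bad A") simp_all
  qed
  also have "\<dots> \<le> R + real n ^ 2 * (2 * e)"
    using bad by (intro add_left_mono mult_left_mono) auto
  also have "\<dots> \<le> R + real n ^ 5 * e"
  proof -
    have "2 * real n ^ 2 \<le> real n ^ 3 * real n ^ 2"
      using n power_mono[of 2 "real n" 3] by (intro mult_right_mono) auto
    then have "real n ^ 2 * 2 \<le> real n ^ 5" by (simp add: power_add[symmetric] mult.commute)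
    then show ?thesis using e by (simp add: mult.assoc[symmetric] mult_right_mono)
  qed
  finally show "net_expect n P f \<le> R + real n ^ 5 * e" .
qed

lemma is_pen_lseD:
  assumes "is_pen_lse C1 C2 n est" "A \<in> adj_set n" "est A = (Kh, Lh, Ph)"
  shows "1 \<le> Lh" "Lh \<le> Kh" "Kh \<le> n" "Ph \<in> NBM n Kh Lh"
    and "\<And>K L P. 1 \<le> L \<Longrightarrow> L \<le> K \<Longrightarrow> K \<le> n \<Longrightarrow> P \<in> NBM n K L \<Longrightarrow>
           frob2 n A Ph + Pen C1 C2 n Kh Lh \<le> frob2 n A P + Pen C1 C2 n K L"
  using assms unfolding is_pen_lse_def by auto

lemma pen_lse_le_of_small_noise:
  assumes n: "2 \<le> n" and Pstar: "unit_entries n Pstar"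
    and lse: "is_pen_lse 1000 1 n est"
    and KL: "1 \<le> L" "L \<le> K" "K \<le> n" and P: "P \<in> NBM n K L" and A: "A \<in> adj_set n"
    and small_net: "\<not> net_deviates n Pstar A"
    and small_P: "noise n Pstar A (\<lambda>i j. Pstar i j - P i j) < frob2 n P Pstar / 16 + real n"
  shows "frob2 n (snd (snd (est A))) Pstar \<le> 3 * (frob2 n P Pstar + Pen 1000 1 n K L)"
proof -
  obtain Kh Lh Ph where est: "est A = (Kh, Lh, Ph)" by (cases "est A") auto
  note h = is_pen_lseD[OF lse A est]
  obtain M where M: "M \<in> nbm_net n Kh Lh" and close: "\<forall>i<n. \<forall>j<n. \<bar>M i j - Ph i j\<bar> \<le> 3 / real n ^ 2"
    using nbm_net_approx[OF n h(4)] by blast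
  have "noise n Pstar A (\<lambda>i j. M i j - Pstar i j) < frob2 n M Pstar / 16 + deviation n Kh Lh"
    using small_net M h unfolding net_deviates_def net_deviates_at_def by force
  moreover have "2 * real n \<le> Pen 1000 1 n K L"
    using deviation_le_Pen[OF n KL(1,2)] real_le_deviation[OF n, of K L] by linarith
  ultimately show ?thesis
    using oracle_inequality_of_small_noise[OF n A Pstar h(5)[OF KL P] close _ small_P
        deviation_le_Pen[OF n h(1,2)]]
    by (simp add: est)
qed

lemma pen_lse_oracle_inequality:
  assumes n: "2 \<le> n" and Pstar: "unit_entries n Pstar" "\<forall>i j. Pstar i j = Pstar j i"
    and lse: "is_pen_lse 1000 1 n est"
    and KL: "1 \<le> L" "L \<le> K" "K \<le> n" and P: "P \<in> NBM n K L"
  defines "R \<equiv> 3 * (frob2 n P Pstar + Pen 1000 1 n K L)"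
  shows "net_prob n Pstar (\<lambda>A. frob2 n (snd (snd (est A))) Pstar \<le> R)
           \<ge> 1 - (real n ^ 2 * log 2 (real n) + 1) * exp (- real n / 32)"
    and "net_expect n Pstar (\<lambda>A. frob2 n (snd (snd (est A))) Pstar) \<le> R + real n ^ 5 * exp (- real n / 32)"
proof -
  define bad where "bad A \<longleftrightarrow> net_deviates n Pstar A \<or>
      frob2 n P Pstar / 16 + real n \<le> noise n Pstar A (\<lambda>i j. Pstar i j - P i j)" for A
  have "(\<Sum>i<n. \<Sum>j<n. (Pstar i j - P i j)\<^sup>2) = frob2 n P Pstar"
    using frob2_commute[of n Pstar P] unfolding frob2_def .
  then have "net_prob n Pstar (\<lambda>A. frob2 n P Pstar / 16 + real n \<le> noise n Pstar A (\<lambda>i j. Pstar i j - P i j))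
      \<le> exp (- real n / 32)"
    using net_prob_noise_ge_le[OF Pstar unit_entries_abs_diff_le[OF Pstar(1) NBM_unit_entries[OF P]]]
    by simp
  moreover have "net_prob n Pstar bad \<le> net_prob n Pstar (net_deviates n Pstar)
      + net_prob n Pstar (\<lambda>A. frob2 n P Pstar / 16 + real n \<le> noise n Pstar A (\<lambda>i j. Pstar i j - P i j))"
    unfolding bad_def by (rule net_prob_disj_le[OF Pstar(1)])
  ultimately have prob_bad: "net_prob n Pstar bad \<le> 2 * exp (- real n / 32)"
    using net_prob_net_deviates_le[OF n Pstar] by linarith
  have good: "frob2 n (snd (snd (est A))) Pstar \<le> R" if "A \<in> adj_set n" "\<not> bad A" for A
    using pen_lse_le_of_small_noise[OF n Pstar(1) lse KL P that(1)] that(2)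
    unfolding bad_def R_def by (simp add: not_le)
  have bounded: "frob2 n (snd (snd (est A))) Pstar \<le> real n ^ 2" if "A \<in> adj_set n" for A
  proof -
    obtain Kh Lh Ph where est: "est A = (Kh, Lh, Ph)" by (cases "est A") auto
    show ?thesis
      using frob2_le_square[OF NBM_unit_entries[OF is_pen_lseD(4)[OF lse that est]] Pstar(1)]
      by (simp add: est)
  qed
  have "0 \<le> Pen 1000 1 n K L"
    using deviation_le_Pen[OF n KL(1,2)] real_le_deviation[OF n, of K L] by linarith
  then have "0 \<le> R"
    unfolding R_def using frob2_nonneg[of n P Pstar] by simp
  from net_prob_net_expect_of_good_event[OF n Pstar(1) good bounded this _ prob_bad]
  show "net_prob n Pstar (\<lambda>A. frob2 n (snd (snd (est A))) Pstar \<le> R)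
           \<ge> 1 - (real n ^ 2 * log 2 (real n) + 1) * exp (- real n / 32)"
    and "net_expect n Pstar (\<lambda>A. frob2 n (snd (snd (est A))) Pstar) \<le> R + real n ^ 5 * exp (- real n / 32)"
    by simp_all
qed

theorem theorem1:
  "\<exists>C1 C2 :: real. 0 < C1 \<and> 0 < C2 \<and>
    (\<forall>(n::nat) Ks Ls Pstar est.
      2 \<le> n \<longrightarrow> 1 \<le> Ls \<longrightarrow> Ls \<le> Ks \<longrightarrow> Ks \<le> n \<longrightarrow>
      (\<exists>z c B H lambda0. nbm_rep n Ks Ls z c B H Pstar \<and>
          (\<forall>i j. Pstar i j = Pstar j i) \<and>
          assumption_A1 Ks B lambda0 \<and> assumption_A2 n Ks Ls z H) \<longrightarrow>
      is_pen_lse C1 C2 n est \<longrightarrow>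
      (\<forall>K L P. 1 \<le> L \<longrightarrow> L \<le> K \<longrightarrow> K \<le> n \<longrightarrow> P \<in> NBM n K L \<longrightarrow>
         net_prob n Pstar (\<lambda>A. frob2 n (snd (snd (est A))) Pstar
              \<le> 3 * (frob2 n P Pstar + Pen C1 C2 n K L))
           \<ge> 1 - (real n ^ 2 * log 2 (real n) + 1) * exp (- real n / 32)
         \<and>
         net_expect n Pstar (\<lambda>A. frob2 n (snd (snd (est A))) Pstar)
           \<le> 3 * (frob2 n P Pstar + Pen C1 C2 n K L) + real n ^ 5 * exp (- real n / 32)))"
proof (rule exI[of _ 1000], rule exI[of _ 1],
    intro conjI[OF _ conjI] zero_less_numeral zero_less_one allI impI)
  fix n Ks Ls Pstar est K L P
  assume n: "2 \<le> n" and "1 \<le> Ls" "Ls \<le> Ks" "Ks \<le> n" and rep: "\<exists>z c B H lambda0. nbm_rep n Ks Ls z c B H Pstar \<and>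
          (\<forall>i j. Pstar i j = Pstar j i) \<and> assumption_A1 Ks B lambda0 \<and> assumption_A2 n Ks Ls z H"
    and lse: "is_pen_lse 1000 1 n est" and KL: "1 \<le> L" "L \<le> K" "K \<le> n" and P: "P \<in> NBM n K L"
  from rep obtain z c B H where rep': "nbm_rep n Ks Ls z c B H Pstar"
    and sym: "\<forall>i j. Pstar i j = Pstar j i"
    by blast
  have "unit_entries n Pstar" using rep' unfolding nbm_rep_def by (rule conjunct1)
  from pen_lse_oracle_inequality[OF n this sym lse KL P]
  show "net_prob n Pstar (\<lambda>A. frob2 n (snd (snd (est A))) Pstar \<le> 3 * (frob2 n P Pstar + Pen 1000 1 n K L))
      \<ge> 1 - (real n ^ 2 * log 2 (real n) + 1) * exp (- real n / 32) \<and>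
    net_expect n Pstar (\<lambda>A. frob2 n (snd (snd (est A))) Pstar)
      \<le> 3 * (frob2 n P Pstar + Pen 1000 1 n K L) + real n ^ 5 * exp (- real n / 32)"
    by (rule conjI)
qed

end
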